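(* For $i=1,2$ let $\sigma_i=(h_i:M_i:x_i:y_i:r_i)\in X\subseteq\mathbb{P}^{16}_{\mathbb{C}}$. Consider the tuple $$\big(h_1h_2 : M_1M_2 : M_2^t x_1+h_1x_2 : h_2y_1+M_1y_2 : h_2r_1+h_1r_2-2\langle x_1,y_2\rangle\big)$$ (matrices and vectors replaced by their entries). If $h_1\neq 0$ or $h_2\neq 0$, then not all entries of this tuple vanish, i.e. it defines a point of $\mathbb{P}^{16}_{\mathbb{C}}$.
   Context: Write a direct isometry of $\mathbb{R}^3$ as $v\mapsto Mv+y$ with $M\in SO(3)$, $y\in\mathbb{R}^3$. Put $x=-M^ty$ and $r=\langle y,y\rangle$. Identify the isometry with the point $(h:M:x:y:r)=(1:m_{11}:\dots:m_{33}:x_1:x_2:x_3:y_1:y_2:y_3:r)$ of $\mathbb{P}^{16}_{\mathbb{C}}$; the coordinates are $h$, the nine entries of $M$, $x$, $y$ and $r$. The variety $X\subseteq\mathbb{P}^{16}_{\mathbb{C}}$ is the complexification of the Zariski closure of the image of the group of direct isometries under this map. Equivalently, it is the complex zero set of all real polynomials vanishing on that image. Here $\langle u,u'\rangle=u^tu'$ is the complex bilinear (not Hermitian) form on $\mathbb{C}^3$. When both points are direct isometries, the tuple is the point of the composition of the two isometries. *)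

theory Defs
  imports "HOL-Analysis.Analysis"
begin

datatype rpoly = Const real | Var nat | Add rpoly rpoly | Mul rpoly rpoly

fun peval :: "rpoly \<Rightarrow> (nat \<Rightarrow> complex) \<Rightarrow> complex" where
  "peval (Const c) z = complex_of_real c"
| "peval (Var i) z = z i"
| "peval (Add p q) z = peval p z + peval q z"
| "peval (Mul p q) z = peval p z * peval q z"

definition homogeneous :: "rpoly \<Rightarrow> bool" where
  "homogeneous p \<longleftrightarrow> (\<exists>d::nat. \<forall>t z. peval p (\<lambda>i. t * z i) = t ^ d * peval p z)"

definition coords :: "complex \<Rightarrow> complex^3^3 \<Rightarrow> complex^3 \<Rightarrow> complex^3 \<Rightarrow> complex \<Rightarrow> nat \<Rightarrow> complex" where
  "coords h M x y r i =
     (if i < 17 then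
       [h, M$1$1, M$1$2, M$1$3, M$2$1, M$2$2, M$2$3, M$3$1, M$3$2, M$3$3,
        x$1, x$2, x$3, y$1, y$2, y$3, r] ! i
      else 0)"

text \<open>Complex bilinear (non-Hermitian) form on C^3.\<close>
definition bil :: "complex^3 \<Rightarrow> complex^3 \<Rightarrow> complex" where
  "bil u v = (\<Sum>i\<in>UNIV. u$i * v$i)"

definition cmat :: "real^3^3 \<Rightarrow> complex^3^3" where
  "cmat M = (\<chi> i j. complex_of_real (M$i$j))"

definition cvec :: "real^3 \<Rightarrow> complex^3" where
  "cvec v = (\<chi> i. complex_of_real (v$i))"

text \<open>Direct isometries v \<mapsto> M v + y with M \<in> SO(3).\<close>
definition direct_isometry :: "real^3^3 \<Rightarrow> real^3 \<Rightarrow> bool" where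
  "direct_isometry M y \<longleftrightarrow> transpose M ** M = mat 1 \<and> det M = 1"

definition iso_coords :: "real^3^3 \<Rightarrow> real^3 \<Rightarrow> nat \<Rightarrow> complex" where
  "iso_coords M y = coords 1 (cmat M) (cvec (- (transpose M *v y))) (cvec y)
                      (complex_of_real (y \<bullet> y))"

text \<open>A real homogeneous polynomial vanishes on the (projective) image iff it vanishes
  on these affine representatives.\<close>
definition vanishes_on_image :: "rpoly \<Rightarrow> bool" where
  "vanishes_on_image p \<longleftrightarrow>
     (\<forall>M y. direct_isometry M y \<longrightarrow> peval p (iso_coords M y) = 0)"

text \<open>Membership of the tuple (h:M:x:y:r) in X \<subseteq> P^16_C: a nonzero tuple at which
  every real homogeneous polynomial vanishing on the image vanishes.\<close>
definition inX :: "complex \<Rightarrow> complex^3^3 \<Rightarrow> complex^3 \<Rightarrow> complex^3 \<Rightarrow> complex \<Rightarrow> bool" where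
  "inX h M x y r \<longleftrightarrow>
     \<not> (h = 0 \<and> M = 0 \<and> x = 0 \<and> y = 0 \<and> r = 0) \<and>
     (\<forall>p. homogeneous p \<and> vanishes_on_image p \<longrightarrow> peval p (coords h M x y r) = 0)"

end

theory Submission
  imports Defs
begin

text \<open>Every point \<open>(h:M:x:y:r)\<close> of \<open>X\<close> satisfies the quadrics \<open>M\<^sup>tM = h\<^sup>2I\<close> and
  \<open>MM\<^sup>t = h\<^sup>2I\<close>, since they vanish on the image of the isometry group. Suppose the
  composite tuple vanishes and, say, \<open>h\<^sub>1 \<noteq> 0 = h\<^sub>2\<close>. Then \<open>M\<^sub>1\<close> is invertible, so
  \<open>M\<^sub>1M\<^sub>2 = 0\<close> and \<open>M\<^sub>1y\<^sub>2 = 0\<close> give \<open>M\<^sub>2 = 0\<close> and \<open>y\<^sub>2 = 0\<close>; the remaining entries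
  \<open>h\<^sub>1x\<^sub>2\<close> and \<open>h\<^sub>1r\<^sub>2\<close> then force \<open>x\<^sub>2 = 0\<close> and \<open>r\<^sub>2 = 0\<close>, so \<open>\<sigma>\<^sub>2\<close> would be the zero
  tuple. The case \<open>h\<^sub>1 = 0 \<noteq> h\<^sub>2\<close> is symmetric, with \<open>M\<^sub>2\<^sup>t\<close> in place of \<open>M\<^sub>1\<close>.\<close>

lemma mat_mult_nth: "(mat c ** (B :: 'a::semiring_1^'k^'n)) $ i $ j = c * B $ i $ j"
  by (simp add: matrix_matrix_mult_def mat_def if_distrib if_distribR cong: if_cong)

lemma mult_mat_nth: "((B :: 'a::comm_semiring_1^'n^'k) ** mat c) $ i $ j = c * B $ i $ j"
  by (simp add: matrix_matrix_mult_def mat_def if_distrib if_distribR mult.commute cong: if_cong)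

lemma mat_mulv_nth: "(mat c *v (v :: 'a::semiring_1^'n)) $ i = c * v $ i"
  by (simp add: matrix_vector_mult_def mat_def if_distrib if_distribR cong: if_cong)

lemma matrix_mul_zero_right [simp]: "(A :: 'a::semiring_1^'n^'m) ** 0 = (0 :: 'a^'k^'m)"
  by (simp add: matrix_matrix_mult_def vec_eq_iff)

lemma matrix_mul_zero_left [simp]: "(0 :: 'a::semiring_1^'n^'m) ** A = (0 :: 'a^'k^'m)"
  by (simp add: matrix_matrix_mult_def vec_eq_iff)

lemma gram_mult_eq_0:
  fixes A :: "'a::field^'n^'n" and B :: "'a^'k^'n"
  assumes "transpose A ** A = mat c" "c \<noteq> 0" "A ** B = 0"
  shows "B = 0"
proof -
  have "mat c ** B = transpose A ** (A ** B)"
    by (simp only: assms(1) matrix_mul_assoc)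
  also have "\<dots> = 0"
    by (simp add: assms(3))
  finally show ?thesis
    using assms(2) by (simp add: vec_eq_iff mat_mult_nth)
qed

lemma mult_gram_eq_0:
  fixes A :: "'a::field^'n^'n" and B :: "'a^'n^'k"
  assumes "A ** transpose A = mat c" "c \<noteq> 0" "B ** A = 0"
  shows "B = 0"
proof -
  have "B ** mat c = (B ** A) ** transpose A"
    by (simp only: assms(1) matrix_mul_assoc[symmetric])
  also have "\<dots> = 0"
    by (simp add: assms(3))
  finally show ?thesis
    using assms(2) by (simp add: vec_eq_iff mult_mat_nth)
qed

lemma gram_mulv_eq_0:
  fixes A :: "'a::field^'n^'n"
  assumes "transpose A ** A = mat c" "c \<noteq> 0" "A *v v = 0"
  shows "v = 0"
proof -
  have "mat c *v v = transpose A *v (A *v v)"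
    by (simp only: assms(1) matrix_vector_mul_assoc)
  also have "\<dots> = 0"
    by (simp add: assms(3))
  finally show ?thesis
    using assms(2) by (simp add: vec_eq_iff mat_mulv_nth)
qed

definition coord_offset :: "3 \<Rightarrow> nat" where
  "coord_offset a = (if a = 1 then 0 else if a = 2 then 1 else 2)"

definition entry_index :: "3 \<Rightarrow> 3 \<Rightarrow> nat" where
  "entry_index a b = 1 + 3 * coord_offset a + coord_offset b"

lemma coords_entry_index: "coords h M x y r (entry_index a b) = M $ a $ b"
  using exhaust_3[of a] exhaust_3[of b]
  by (auto simp: coords_def entry_index_def coord_offset_def numeral_eq_Suc)

lemma coords_0: "coords h M x y r 0 = h"
  by (simp add: coords_def)

definition var_matrix :: "(3 \<Rightarrow> 3 \<Rightarrow> nat) \<Rightarrow> (nat \<Rightarrow> complex) \<Rightarrow> complex^3^3" where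
  "var_matrix g z = (\<chi> a b. z (g a b))"

lemma var_matrix_entry_index: "var_matrix entry_index (coords h M x y r) = M"
  by (simp add: var_matrix_def coords_entry_index vec_eq_iff)

lemma var_matrix_entry_index_transposed:
  "var_matrix (\<lambda>a b. entry_index b a) (coords h M x y r) = transpose M"
  by (simp add: var_matrix_def coords_entry_index vec_eq_iff transpose_def)

text \<open>The quadric \<open>(N\<^sup>tN)\<^sub>i\<^sub>j = \<delta>\<^sub>i\<^sub>j h\<^sup>2\<close>, where \<open>N\<^sub>a\<^sub>b\<close> is variable \<open>g a b\<close> and \<open>h\<close> is variable \<open>0\<close>;
  taking for \<open>N\<close> either \<open>M\<close> or \<open>M\<^sup>t\<close> gives both families of orthogonality relations.\<close>
definition gram_poly :: "(3 \<Rightarrow> 3 \<Rightarrow> nat) \<Rightarrow> 3 \<Rightarrow> 3 \<Rightarrow> rpoly" where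
  "gram_poly g i j =
     Add (Add (Add (Mul (Var (g 1 i)) (Var (g 1 j))) (Mul (Var (g 2 i)) (Var (g 2 j))))
              (Mul (Var (g 3 i)) (Var (g 3 j))))
         (Mul (Const (if i = j then -1 else 0)) (Mul (Var 0) (Var 0)))"

lemma peval_gram_poly:
  "peval (gram_poly g i j) z =
     (transpose (var_matrix g z) ** var_matrix g z) $ i $ j - (if i = j then z 0 ^ 2 else 0)"
  by (simp add: gram_poly_def var_matrix_def matrix_matrix_mult_def transpose_def sum_3
      power2_eq_square)

lemma homogeneous_gram_poly: "homogeneous (gram_poly g i j)"
  unfolding homogeneous_def
  by (rule exI[of _ 2]) (simp add: gram_poly_def power2_eq_square algebra_simps)

lemma cmat_mult: "cmat (A ** B) = cmat A ** cmat B"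
  by (simp add: cmat_def matrix_matrix_mult_def vec_eq_iff)

lemma cmat_transpose: "cmat (transpose A) = transpose (cmat A)"
  by (simp add: cmat_def transpose_def vec_eq_iff)

lemma cmat_mat: "cmat (mat c) = mat (of_real c)"
  by (simp add: cmat_def mat_def vec_eq_iff)

lemma iso_coords_0: "iso_coords N v 0 = 1"
  unfolding iso_coords_def by (rule coords_0)

lemma inX_gram_matrix:
  assumes "inX h M x y r"
    and "\<And>N v. direct_isometry N v \<Longrightarrow>
           transpose (var_matrix g (iso_coords N v)) ** var_matrix g (iso_coords N v) = mat 1"
  shows "transpose (var_matrix g (coords h M x y r)) ** var_matrix g (coords h M x y r) = mat (h ^ 2)"
proof -
  have "vanishes_on_image (gram_poly g i j)" for i j
    unfolding vanishes_on_image_def peval_gram_poly iso_coords_0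
    using assms(2) by (simp add: mat_def)
  then have "peval (gram_poly g i j) (coords h M x y r) = 0" for i j
    using assms(1) homogeneous_gram_poly by (simp add: inX_def)
  then have "(transpose (var_matrix g (coords h M x y r)) ** var_matrix g (coords h M x y r)) $ i $ j
      = mat (h ^ 2) $ i $ j" for i j
    unfolding peval_gram_poly coords_0 by (simp add: mat_def)
  then show ?thesis
    by (simp add: vec_eq_iff)
qed

lemma inX_transpose_mult_self: "inX h M x y r \<Longrightarrow> transpose M ** M = mat (h ^ 2)"
  using inX_gram_matrix[of h M x y r entry_index]
  by (simp add: var_matrix_entry_index iso_coords_def direct_isometry_def cmat_transpose[symmetric]
      cmat_mult[symmetric] cmat_mat)

lemma inX_mult_transpose_self: "inX h M x y r \<Longrightarrow> M ** transpose M = mat (h ^ 2)"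
  using inX_gram_matrix[of h M x y r "\<lambda>a b. entry_index b a"]
  by (simp add: var_matrix_entry_index_transposed iso_coords_def direct_isometry_def
      cmat_transpose[symmetric] cmat_mult[symmetric] cmat_mat matrix_left_right_inverse)

lemma bil_zero_left [simp]: "bil 0 v = 0"
  and bil_zero_right [simp]: "bil v 0 = 0"
  by (simp_all add: bil_def)

lemma composite_vanishes_imp_right_zero:
  assumes "inX h1 M1 x1 y1 r1" "h1 \<noteq> 0" "M1 ** M2 = 0" "transpose M2 *v x1 + h1 *s x2 = 0"
    "M1 *v y2 = 0" "h1 * r2 - 2 * bil x1 y2 = 0"
  shows "M2 = 0 \<and> x2 = 0 \<and> y2 = 0 \<and> r2 = 0"
proof -
  have gram: "transpose M1 ** M1 = mat (h1 ^ 2)" and "h1 ^ 2 \<noteq> 0"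
    using assms(1,2) inX_transpose_mult_self by auto
  then have "M2 = 0" "y2 = 0"
    using gram_mult_eq_0[OF gram _ assms(3)] gram_mulv_eq_0[OF gram _ assms(5)] by auto
  moreover from \<open>M2 = 0\<close> have "x2 = 0"
    using assms(2,4) by simp
  moreover from \<open>y2 = 0\<close> have "r2 = 0"
    using assms(2,6) by simp
  ultimately show ?thesis by blast
qed

lemma composite_vanishes_imp_left_zero:
  assumes "inX h2 M2 x2 y2 r2" "h2 \<noteq> 0" "M1 ** M2 = 0" "transpose M2 *v x1 = 0"
    "h2 *s y1 + M1 *v y2 = 0" "h2 * r1 - 2 * bil x1 y2 = 0"
  shows "M1 = 0 \<and> x1 = 0 \<and> y1 = 0 \<and> r1 = 0"
proof -
  have gram: "M2 ** transpose M2 = mat (h2 ^ 2)" and "h2 ^ 2 \<noteq> 0"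
    using assms(1,2) inX_mult_transpose_self by auto
  then have "M1 = 0"
    using mult_gram_eq_0[OF gram _ assms(3)] by auto
  moreover have "x1 = 0"
    using gram_mulv_eq_0[of "transpose M2" "h2 ^ 2" x1] gram \<open>h2 ^ 2 \<noteq> 0\<close> assms(4) by simp
  moreover from \<open>M1 = 0\<close> have "y1 = 0"
    using assms(2,5) by simp
  moreover from \<open>x1 = 0\<close> have "r1 = 0"
    using assms(2,6) by simp
  ultimately show ?thesis by blast
qed

lemma not_inX_zero: "\<not> inX 0 0 0 0 0"
  by (simp add: inX_def)

theorem mainTheorem1:
  fixes h1 h2 r1 r2 :: complex and M1 M2 :: "complex^3^3" and x1 x2 y1 y2 :: "complex^3"
  assumes "inX h1 M1 x1 y1 r1" and "inX h2 M2 x2 y2 r2"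
    and "h1 \<noteq> 0 \<or> h2 \<noteq> 0"
  shows "\<not> (h1 * h2 = 0 \<and> M1 ** M2 = 0 \<and>
             transpose M2 *v x1 + h1 *s x2 = 0 \<and>
             h2 *s y1 + M1 *v y2 = 0 \<and>
             h2 * r1 + h1 * r2 - 2 * bil x1 y2 = 0)"
proof (intro notI, elim conjE)
  assume h: "h1 * h2 = 0" and M: "M1 ** M2 = 0" and x: "transpose M2 *v x1 + h1 *s x2 = 0"
    and y: "h2 *s y1 + M1 *v y2 = 0" and r: "h2 * r1 + h1 * r2 - 2 * bil x1 y2 = 0"
  consider "h1 \<noteq> 0" "h2 = 0" | "h1 = 0" "h2 \<noteq> 0"
    using assms(3) h by auto
  then show False
  proof cases
    case 1
    have "M1 *v y2 = 0" "h1 * r2 - 2 * bil x1 y2 = 0"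
      using y r 1(2) by simp_all
    then have "M2 = 0 \<and> x2 = 0 \<and> y2 = 0 \<and> r2 = 0"
      by (rule composite_vanishes_imp_right_zero[OF assms(1) 1(1) M x])
    with 1(2) assms(2) not_inX_zero show False
      by simp
  next
    case 2
    have "transpose M2 *v x1 = 0" "h2 * r1 - 2 * bil x1 y2 = 0"
      using x r 2(1) by simp_all
    then have "M1 = 0 \<and> x1 = 0 \<and> y1 = 0 \<and> r1 = 0"
      using composite_vanishes_imp_left_zero[OF assms(2) 2(2) M _ y] by blast
    with 2(1) assms(1) not_inX_zero show False
      by simp
  qed
qed

end
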